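(* There are absolute constants $c_4,c_5,C_6 > 0$ such that for all sufficiently small $a > 0$ the following hold (with $h$ and $G_a$ as in the context). First, $h(e^{2\pi i t}) \in G_a$ for all real $t$ with $|t| \le c_4a$. Second, $|h(e^{2\pi i t})| \le 1-c_5\frac{|t|}{\log^2(a^{-1})}$ for all $t \in [-\frac{1}{2},\frac{1}{2}]\setminus [-C_6a^{1/2},C_6a^{1/2}]$.
   Context: For $a>0$ let $r = a^{-1/2}$ (floor functions omitted, so $r$ is a positive integer). Let $r_* \in \{1,\dots,r\}$ be such that $\sum_{j=1}^{r_*} \frac{1}{\log^2(j+3)}-\sum_{j=r_*+1}^r \frac{1}{\log^2(j+3)} \in [20,21]$. Let $\epsilon_j = +1$ for $1 \le j \le r_*$ and $\epsilon_j = -1$ for $r_*+1 \le j \le r$. Let $\lambda_a>0$ be such that $\sum_{j=1}^r \frac{\lambda_a}{j^2\log^2(j+3)} = 1$ and set $d_j = \frac{\lambda_a}{j^2\log^2(j+3)}$. Define $\widetilde{h}(z) = \widetilde{\lambda}_a\sum_{j=1}^r \epsilon_j d_j z^j$, where $\widetilde{\lambda}_a>0$ is chosen so that $\widetilde{h}(1) = 1$, and $h(z) = (1-a^{10})\widetilde{h}(z)$. Let $\alpha = e^{ia}$, $\beta = e^{-ia}$, and $G_a = \{z \in \mathbb{C} : \arg(\frac{\alpha-z}{z-\beta}) \in (\frac{a}{2},a)\}$ (principal argument). $\log$ is the natural logarithm. *)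

theory Defs
  imports "HOL-Analysis.Analysis"
begin

text \<open>r = a^(-1/2), floor taken (the paper omits floors).\<close>
definition rr :: "real \<Rightarrow> nat" where
  "rr a = nat \<lfloor>a powr (-1/2)\<rfloor>"

definition rstar_ok :: "real \<Rightarrow> nat \<Rightarrow> bool" where
  "rstar_ok a rs \<longleftrightarrow> 1 \<le> rs \<and> rs \<le> rr a \<and>
     (let S = (\<Sum>j=1..rs. 1 / (ln (real j + 3))\<^sup>2) - (\<Sum>j=rs+1..rr a. 1 / (ln (real j + 3))\<^sup>2)
      in 20 \<le> S \<and> S \<le> 21)"

definition eps :: "nat \<Rightarrow> nat \<Rightarrow> real" where
  "eps rs j = (if j \<le> rs then 1 else -1)"

definition lam :: "real \<Rightarrow> real" where
  "lam a = 1 / (\<Sum>j=1..rr a. 1 / ((real j)\<^sup>2 * (ln (real j + 3))\<^sup>2))"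

definition dd :: "real \<Rightarrow> nat \<Rightarrow> real" where
  "dd a j = lam a / ((real j)\<^sup>2 * (ln (real j + 3))\<^sup>2)"

text \<open>tilde-lambda chosen so that tilde-h(1) = 1.\<close>
definition lamt :: "real \<Rightarrow> nat \<Rightarrow> real" where
  "lamt a rs = 1 / (\<Sum>j=1..rr a. eps rs j * dd a j)"

definition htilde :: "real \<Rightarrow> nat \<Rightarrow> complex \<Rightarrow> complex" where
  "htilde a rs z = of_real (lamt a rs) * (\<Sum>j=1..rr a. of_real (eps rs j * dd a j) * z ^ j)"

definition hh :: "real \<Rightarrow> nat \<Rightarrow> complex \<Rightarrow> complex" where
  "hh a rs z = of_real (1 - a ^ 10) * htilde a rs z"

definition GG :: "real \<Rightarrow> complex set" where
  "GG a = {z. Arg ((cis a - z) / (z - cis (-a))) \<in> {a/2<..<a}}"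

end

(*
  Write h~(e^(i theta)) = sum_j c_j e^(i j theta) with sum_j c_j = 1 and c_j = mu eps_j / (j^2 log^2(j+3)),
  mu ~ 1.

  Small t: by Taylor expansion, 1 - Re h~ is theta^2/2 times the second moment sum_j c_j j^2, which the
  choice of r_* makes 20..21 times mu, while Im h~ is theta times the first moment, which is O(mu).
  Hence (Im h~)^2 <= 1 - Re h~ <= 1, so h~ stays in the closed unit disc, and the factor 1 - a^10
  pushes h strictly inside it while keeping |h + 1|^2 close to 4.  Every point w of the open unit
  disc with |w + 1|^2 > 2 + 2 cos a lies in G_a: rotating (e^(ia) - w)/(w - e^(-ia)) by e^(-ia) and
  by e^(-ia/2) gives imaginary parts with the signs of |w|^2 - 1 and |w + 1|^2 - 2 - 2 cos a.

  Large t: pick k with k|t| in [1/4, 1/2], so that Re e^(2 pi i k t) <= 0.  Pairing the positive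
  coefficients d_j and d_(j+k) for k <= j < 2k gains about k d_(3k) ~ 1/(k log^2 k) >= |t| / log^2(1/a).
  This gain dominates the mass of the negative coefficients, since r_* >= r/16: the signed sum of the
  1/log^2(j+3) can only be positive if r_* is a fixed fraction of r.
*)
theory Submission
  imports Defs "HOL-Real_Asymp.Real_Asymp"
begin

section \<open>Numerical facts about logarithms and series\<close>

lemma ln_le_of_le_exp_approx:
  assumes "0 < y" "y \<le> (1 + x / real n) ^ n" "- real n \<le> x" "0 < n"
  shows "ln y \<le> x"
proof -
  have "(1 + x / real n) ^ n \<le> exp x"
    by (rule exp_ge_one_plus_x_over_n_power_n) (use assms in auto)
  with assms show ?thesis
    by (metis ln_exp ln_le_cancel_iff exp_gt_zero order_trans)
qed

lemma ln_ge_of_exp_approx: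
  assumes "0 < y" "1 \<le> y * (1 - x / real n) ^ n" "x \<le> real n" "0 < n"
  shows "x \<le> ln y"
proof -
  have "(1 - x / real n) ^ n \<le> exp (-x)"
    by (rule exp_ge_one_minus_x_over_n_power_n) (use assms in auto)
  then have "1 \<le> y * exp (-x)"
    using assms by (meson order_trans mult_left_mono less_imp_le)
  then have "exp x \<le> y" by (simp add: exp_minus field_simps)
  with assms show ?thesis by (simp add: ln_ge_iff)
qed

lemma ln_small_integer_bounds:
  "1 \<le> ln (3::real)" "135/100 \<le> ln (4::real)" "ln (4::real) \<le> 3/2"
  "155/100 \<le> ln (5::real)" "ln (5::real) \<le> 17/10" "ln (6::real) \<le> 2"
proof -
  show "1 \<le> ln (3::real)" using exp_le by (simp add: ln_ge_iff)
  show "135/100 \<le> ln (4::real)"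
    by (rule ln_ge_of_exp_approx[where n=32]) (simp_all add: power_divide)
  show "ln (4::real) \<le> 3/2"
    by (rule ln_le_of_le_exp_approx[where n=16]) (simp_all add: power_divide)
  show "155/100 \<le> ln (5::real)"
    by (rule ln_ge_of_exp_approx[where n=32]) (simp_all add: power_divide)
  show "ln (5::real) \<le> 17/10"
    by (rule ln_le_of_le_exp_approx[where n=32]) (simp_all add: power_divide)
  show "ln (6::real) \<le> 2"
    by (rule ln_le_of_le_exp_approx[where n=16]) (simp_all add: power_divide)
qed

lemma one_le_ln_add_3: "1 \<le> ln (real j + 3)"
  using ln_small_integer_bounds(1) by (smt (verit) ln_le_cancel_iff of_nat_0_le_iff)

lemma sum_inverse_squares_telescope:
  assumes "1 \<le> m" "m \<le> n"
  shows "(\<Sum>j=m+1..n. 1 / (real j)^2) \<le> 1 / real m - 1 / real n"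
  using assms(2)
proof (induction n rule: dec_induct)
  case base
  then show ?case by simp
next
  case (step n)
  have n: "1 \<le> real n" using step.hyps assms(1) by simp
  have "1 / (real (Suc n))^2 \<le> 1 / (real n * real (Suc n))"
    using n by (intro divide_left_mono) (auto simp: power2_eq_square)
  also have "\<dots> = 1 / real n - 1 / real (Suc n)"
    using n by (simp add: field_simps)
  finally have "1 / (real (Suc n))^2 \<le> 1 / real n - 1 / real (Suc n)" .
  with step.IH step.hyps show ?case by (simp add: sum.cl_ivl_Suc)
qed

lemma sum_inverse_squares_tail_le:
  assumes "1 \<le> m"
  shows "(\<Sum>j=m+1..n. 1 / (real j)^2) \<le> 1 / real m"
proof (cases "m \<le> n")
  case True
  then show ?thesis
    using sum_inverse_squares_telescope[OF assms True] by (smt (verit) divide_nonneg_nonneg of_nat_0_le_iff)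
qed simp

lemma sum_inverse_squares_le_2: "(\<Sum>j=1..n. 1 / (real j)^2) \<le> 2"
proof (cases "1 \<le> n")
  case True
  then have "(\<Sum>j=1..n. 1 / (real j)^2) = 1 + (\<Sum>j=1+1..n. 1 / (real j)^2)"
    by (simp add: sum.atLeast_Suc_atMost)
  then show ?thesis using sum_inverse_squares_tail_le[of 1 n] by simp
qed simp

text \<open>The mean value bound \<open>1/((j+3) ln\<^sup>2(j+3)) \<le> 1/ln(j+2) - 1/ln(j+3)\<close>, together with
  \<open>j + 3 \<le> 2j\<close>.\<close>
lemma inverse_mult_ln_sq_le_telescope:
  assumes "3 \<le> j"
  shows "1 / (real j * (ln (real j + 3))^2) \<le> 2 * (1 / ln (real j + 2) - 1 / ln (real j + 3))"
proof -
  define A B where "A = ln (real j + 2)" and "B = ln (real j + 3)"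
  have "ln 3 \<le> A" unfolding A_def using assms by (subst ln_le_cancel_iff) auto
  then have A1: "1 \<le> A" using ln_small_integer_bounds(1) by linarith
  have AB: "A \<le> B" unfolding A_def B_def by simp
  have "ln (real j + 2) - ln (real j + 3) \<le> (real j + 2) / (real j + 3) - 1"
    using ln_le_minus_one[of "(real j + 2) / (real j + 3)"] by (simp add: ln_div)
  then have diff: "1 / (real j + 3) \<le> B - A"
    unfolding A_def B_def by (simp add: field_simps)
  have "(1 / (real j + 3)) / (B * B) \<le> (B - A) / (B * B)"
    using diff A1 AB by (intro divide_right_mono) auto
  also have "\<dots> \<le> (B - A) / (A * B)"
    using A1 AB by (intro divide_left_mono mult_right_mono) auto
  also have "\<dots> = 1 / A - 1 / B"
    using A1 AB by (simp add: diff_frac_eq)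
  finally have step: "(1 / (real j + 3)) / (B * B) \<le> 1 / A - 1 / B" .
  have "1 / real j \<le> 2 / (real j + 3)" using assms by (simp add: divide_simps)
  then have "1 / (real j * B^2) \<le> 2 * ((1 / (real j + 3)) / (B * B))"
    using mult_right_mono[of "1 / real j" "2 / (real j + 3)" "1 / B^2"]
    by (simp add: power2_eq_square)
  also have "\<dots> \<le> 2 * (1 / A - 1 / B)"
    using step by simp
  finally show ?thesis unfolding A_def B_def .
qed

lemma sum_inverse_mult_ln_sq_telescope:
  assumes "2 \<le> r"
  shows "(\<Sum>j=3..r. 1 / (real j * (ln (real j + 3))^2)) \<le> 2 / ln 5 - 2 / ln (real r + 3)"
  using assms
proof (induction r rule: dec_induct)
  case base
  then show ?case by simp
next
  case (step r)
  have "1 / (real (Suc r) * (ln (real (Suc r) + 3))^2)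
        \<le> 2 * (1 / ln (real r + 3) - 1 / ln (real (Suc r) + 3))"
    using inverse_mult_ln_sq_le_telescope[of "Suc r"] step.hyps
    by (simp add: add.commute add.left_commute)
  with step.IH step.hyps show ?case by (simp add: sum.cl_ivl_Suc)
qed

lemma sum_inverse_mult_ln_sq_le: "(\<Sum>j=1..r. 1 / (real j * (ln (real j + 3))^2)) \<le> 41/20"
proof -
  define f where "f j = 1 / (real j * (ln (real j + 3))^2)" for j :: nat
  have f_nonneg: "0 \<le> f j" for j unfolding f_def by simp
  have "(\<Sum>j=1..r. f j) \<le> (\<Sum>j\<in>{1,2} \<union> {3..r}. f j)"
    using f_nonneg by (intro sum_mono2) auto
  also have "\<dots> = f 1 + f 2 + (\<Sum>j=3..r. f j)"
    by (subst sum.union_disjoint) auto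
  also have "(\<Sum>j=3..r. f j) \<le> 2 / ln 5"
  proof (cases "2 \<le> r")
    case True
    then show ?thesis
      using sum_inverse_mult_ln_sq_telescope one_le_ln_add_3[of r] unfolding f_def
      by (smt (verit) divide_nonneg_nonneg)
  qed (use ln_small_integer_bounds(4) in simp)
  also have "f 1 \<le> 1 / (135/100)^2"
    using ln_small_integer_bounds(2) unfolding f_def
    by (simp add: divide_left_mono power_mono)
  also have "f 2 \<le> 1 / (2 * (155/100)^2)"
    using ln_small_integer_bounds(4) unfolding f_def
    by (simp add: divide_left_mono power_mono)
  also have "2 / ln 5 \<le> 2 / (155/100::real)"
    using ln_small_integer_bounds(4) by (intro divide_left_mono) auto
  finally show ?thesis unfolding f_def by (simp add: power2_eq_square)
qed

definition log_weight :: "nat \<Rightarrow> real" where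
  "log_weight j = 1 / ((real j)^2 * (ln (real j + 3))^2)"

lemma log_weight_nonneg: "0 \<le> log_weight j"
  by (simp add: log_weight_def)

lemma log_weight_antimono:
  assumes "1 \<le> i" "i \<le> j"
  shows "log_weight j \<le> log_weight i"
proof -
  have "(ln (real i + 3))^2 \<le> (ln (real j + 3))^2"
    using assms one_le_ln_add_3[of i] by (intro power_mono) auto
  moreover have "(real i)^2 \<le> (real j)^2" using assms by (intro power_mono) auto
  ultimately have "(real i)^2 * (ln (real i + 3))^2 \<le> (real j)^2 * (ln (real j + 3))^2"
    by (intro mult_mono) auto
  then show ?thesis
    unfolding log_weight_def using assms one_le_ln_add_3[of i]
    by (intro divide_left_mono) auto
qed

lemma log_weight_le_inverse_square: "log_weight j \<le> 1 / (real j)^2"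
proof (cases "j = 0")
  case False
  have "(real j)^2 * 1 \<le> (real j)^2 * (ln (real j + 3))^2"
    using one_le_ln_add_3[of j] by (intro mult_left_mono) (auto simp: one_le_power)
  then show ?thesis
    unfolding log_weight_def using False by (intro divide_left_mono) auto
qed (simp add: log_weight_def)

lemma sum_log_weight_bounds:
  assumes "3 \<le> r"
  shows "55/100 \<le> (\<Sum>j=1..r. log_weight j)" "(\<Sum>j=1..r. log_weight j) \<le> 2"
proof -
  have "(ln (4::real))^2 \<le> (3/2)^2"
    using ln_small_integer_bounds(2,3) by (intro power_mono) auto
  then have "4/9 \<le> log_weight 1"
    using ln_small_integer_bounds(2) by (simp add: log_weight_def field_simps)
  moreover have "(ln (5::real))^2 \<le> (17/10)^2"
    using ln_small_integer_bounds(4,5) by (intro power_mono) auto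
  then have "25/289 \<le> log_weight 2"
    using ln_small_integer_bounds(4) by (simp add: log_weight_def field_simps)
  moreover have "(ln (6::real))^2 \<le> 2^2"
    using one_le_ln_add_3[of 3] ln_small_integer_bounds(6) by (intro power_mono) auto
  then have "1/36 \<le> log_weight 3"
    using one_le_ln_add_3[of 3] by (simp add: log_weight_def field_simps)
  moreover have "(\<Sum>j\<in>{1,2,3}. log_weight j) \<le> (\<Sum>j=1..r. log_weight j)"
    using assms log_weight_nonneg by (intro sum_mono2) auto
  ultimately show "55/100 \<le> (\<Sum>j=1..r. log_weight j)" by simp
  show "(\<Sum>j=1..r. log_weight j) \<le> 2"
    using sum_mono[OF log_weight_le_inverse_square] sum_inverse_squares_le_2[of r]
    by (rule order_trans)
qed

section \<open>Taylor bounds for sine and cosine\<close>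

lemma one_minus_cos_le: "1 - cos (x::real) \<le> x^2 / 2"
proof -
  obtain s where "cos x = (\<Sum>m<2. cos_coeff m * x ^ m) + cos (s + 1/2 * real 2 * pi) / fact 2 * x ^ 2"
    using Maclaurin_cos_expansion by blast
  moreover have "cos s * x^2 \<le> x^2"
    using mult_right_mono[OF cos_le_one, of "x^2" s] by simp
  ultimately show ?thesis
    by (simp add: cos_coeff_def lessThan_nat_numeral fact_numeral)
qed

lemma one_minus_cos_ge: "x^2 / 2 - x^4 / 24 \<le> 1 - cos (x::real)"
proof -
  obtain s where "cos x = (\<Sum>m<4. cos_coeff m * x ^ m) + cos (s + 1/2 * real 4 * pi) / fact 4 * x ^ 4"
    using Maclaurin_cos_expansion by blast
  moreover have "(\<Sum>m<4. cos_coeff m * x ^ m) = 1 - x^2 / 2"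
    by (simp add: cos_coeff_def lessThan_nat_numeral fact_numeral power2_eq_square)
  moreover have "cos (s + 1/2 * real 4 * pi) * x ^ 4 \<le> x ^ 4"
    using mult_right_mono[OF cos_le_one, of "x^4"] by simp
  ultimately show ?thesis
    by (simp add: fact_numeral)
qed

lemma abs_sin_minus_le: "\<bar>sin x - x\<bar> \<le> \<bar>x::real\<bar>^3 / 6"
proof -
  have "\<bar>sin x - (\<Sum>m<3. sin_coeff m * x ^ m)\<bar> \<le> inverse (fact 3) * \<bar>x\<bar> ^ 3"
    by (rule Maclaurin_sin_bound)
  moreover have "(\<Sum>m<3. sin_coeff m * x ^ m) = x"
    by (simp add: sin_coeff_def lessThan_nat_numeral)
  ultimately show ?thesis
    by (simp add: fact_numeral)
qed

lemma abs_sum_one_minus_cos_taylor_le: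
  fixes c :: "nat \<Rightarrow> real"
  shows "\<bar>(\<Sum>j\<in>I. c j * (1 - cos (real j * \<theta>))) - \<theta>^2 / 2 * (\<Sum>j\<in>I. c j * (real j)^2)\<bar>
    \<le> \<theta>^4 / 24 * (\<Sum>j\<in>I. \<bar>c j\<bar> * (real j)^4)"
proof -
  have term_le: "\<bar>c j * ((1 - cos (real j * \<theta>)) - (real j * \<theta>)^2 / 2)\<bar> \<le> \<bar>c j\<bar> * ((real j * \<theta>)^4 / 24)"
    for j
  proof -
    have "\<bar>(1 - cos (real j * \<theta>)) - (real j * \<theta>)^2 / 2\<bar> \<le> (real j * \<theta>)^4 / 24"
      using one_minus_cos_le[of "real j * \<theta>"] one_minus_cos_ge[of "real j * \<theta>"] by linarith
    then show ?thesis unfolding abs_mult by (rule mult_left_mono) simp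
  qed
  have "\<bar>(\<Sum>j\<in>I. c j * (1 - cos (real j * \<theta>))) - \<theta>^2 / 2 * (\<Sum>j\<in>I. c j * (real j)^2)\<bar>
      = \<bar>\<Sum>j\<in>I. c j * ((1 - cos (real j * \<theta>)) - (real j * \<theta>)^2 / 2)\<bar>"
    by (simp add: sum_subtractf sum.distrib sum_distrib_left power_mult_distrib algebra_simps)
  also have "\<dots> \<le> (\<Sum>j\<in>I. \<bar>c j\<bar> * ((real j * \<theta>)^4 / 24))"
    by (rule order_trans[OF sum_abs sum_mono]) (rule term_le)
  also have "\<dots> = \<theta>^4 / 24 * (\<Sum>j\<in>I. \<bar>c j\<bar> * (real j)^4)"
    by (simp add: sum_distrib_left power_mult_distrib algebra_simps)
  finally show ?thesis .
qed

lemma abs_sum_sin_taylor_le: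
  fixes c :: "nat \<Rightarrow> real"
  shows "\<bar>(\<Sum>j\<in>I. c j * sin (real j * \<theta>)) - \<theta> * (\<Sum>j\<in>I. c j * real j)\<bar>
    \<le> \<bar>\<theta>\<bar>^3 / 6 * (\<Sum>j\<in>I. \<bar>c j\<bar> * (real j)^3)"
proof -
  have "\<bar>(\<Sum>j\<in>I. c j * sin (real j * \<theta>)) - \<theta> * (\<Sum>j\<in>I. c j * real j)\<bar>
      = \<bar>\<Sum>j\<in>I. c j * (sin (real j * \<theta>) - real j * \<theta>)\<bar>"
    by (simp add: sum_subtractf sum_distrib_left algebra_simps)
  also have "\<dots> \<le> (\<Sum>j\<in>I. \<bar>c j\<bar> * (\<bar>real j * \<theta>\<bar>^3 / 6))"
  proof (rule order_trans[OF sum_abs sum_mono])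
    fix j
    show "\<bar>c j * (sin (real j * \<theta>) - real j * \<theta>)\<bar> \<le> \<bar>c j\<bar> * (\<bar>real j * \<theta>\<bar>^3 / 6)"
      using mult_left_mono[OF abs_sin_minus_le, of "\<bar>c j\<bar>" "real j * \<theta>"] by (simp add: abs_mult)
  qed
  also have "\<dots> = \<bar>\<theta>\<bar>^3 / 6 * (\<Sum>j\<in>I. \<bar>c j\<bar> * (real j)^3)"
    by (simp add: sum_distrib_left abs_mult power_mult_distrib algebra_simps)
  finally show ?thesis .
qed

section \<open>The region \<open>G\<^sub>a\<close>\<close>

lemma Im_mult_cis_minus:
  assumes "z \<noteq> 0"
  shows "Im (z * cis (-\<phi>)) = cmod z * sin (Arg z - \<phi>)"
proof -
  have "Im (z * cis (-\<phi>)) = Im z * cos \<phi> - Re z * sin \<phi>" by simp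
  also have "\<dots> = cmod z * (sin (Arg z) * cos \<phi> - cos (Arg z) * sin \<phi>)"
    using assms by (simp add: sin_Arg cos_Arg field_simps)
  finally show ?thesis by (simp add: sin_diff)
qed

lemma Arg_between_if_Im_rotations:
  assumes "0 < a" "a < pi" "Im (z * cis (-(a/2))) > 0" "Im (z * cis (-a)) < 0"
  shows "a/2 < Arg z \<and> Arg z < a"
proof -
  have z: "z \<noteq> 0" using assms(4) by auto
  define \<theta> where "\<theta> = Arg z"
  have \<theta>: "-pi < \<theta>" "\<theta> \<le> pi" using Arg_bounded[of z] unfolding \<theta>_def by auto
  have pos: "sin (\<theta> - a/2) > 0" and neg: "sin (\<theta> - a) < 0"
    using assms(3,4) Im_mult_cis_minus[OF z] z unfolding \<theta>_def
    by (metis zero_less_mult_pos zero_less_norm_iff, metis mult_less_0_iff norm_ge_zero not_less)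
  show ?thesis
    unfolding \<theta>_def[symmetric]
  proof (rule ccontr)
    assume "\<not> (a/2 < \<theta> \<and> \<theta> < a)"
    then consider "a \<le> \<theta>" | "\<theta> \<le> a/2" "-pi \<le> \<theta> - a/2" | "\<theta> - a/2 < -pi" by linarith
    then show False
    proof cases
      case 1
      then have "0 \<le> sin (\<theta> - a)" using \<theta> assms(1) by (intro sin_ge_zero) auto
      with neg show False by linarith
    next
      case 2
      then have "0 \<le> sin (a/2 - \<theta>)" by (intro sin_ge_zero) auto
      with pos show False by (metis minus_diff_eq sin_minus neg_0_le_iff_le not_less)
    next
      case 3
      then have "sin (\<theta> - a + pi + 2*pi) < 0" using \<theta> assms(1,2) by (intro sin_lt_zero) auto
      moreover have "sin (\<theta> - a + pi + 2*pi) = - sin (\<theta> - a)"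
        by (simp only: sin_periodic) simp
      ultimately show False using neg by linarith
    qed
  qed
qed

lemma Im_GG_numerator_rotated:
  fixes w :: complex and a :: real
  defines "P \<equiv> (cis a - w) * cnj (w - cis (-a))"
  shows "Im (P * cis (-a)) = ((cmod w)^2 - 1) * sin a"
    and "Im (P * cis (-(a/2))) = sin (a/2) * ((cmod (w + 1))^2 - 2 - 2 * cos a)"
proof -
  define x y where "x = Re w" and "y = Im w"
  have ReP: "Re P = (cos a - x) * (x - cos a) + (sin a - y) * (y + sin a)"
    and ImP: "Im P = (sin a - y) * (x - cos a) - (cos a - x) * (y + sin a)"
    unfolding P_def x_def y_def by (simp_all add: algebra_simps)
  have ring_identity: "((s - y) * (x - c) - (c - x) * (y + s)) * c - ((c - x) * (x - c) + (s - y) * (y + s)) * s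
      = ((x^2 + y^2) - (s^2 + c^2)) * s" for s c :: real
    by (simp add: algebra_simps power2_eq_square)
  show "Im (P * cis (-a)) = ((cmod w)^2 - 1) * sin a"
    using ring_identity[of "sin a" "cos a"] by (simp add: ReP ImP cmod_power2 x_def y_def)
  define b where "b = a/2"
  have sin_a: "sin a = 2 * sin b * cos b" and cos_a: "cos a = (cos b)^2 - (sin b)^2"
    by (simp_all add: b_def sin_double[symmetric] cos_double[symmetric])
  have half_angle_identity:
    "((2 * s * c - y) * (x - (c^2 - s^2)) - ((c^2 - s^2) - x) * (y + 2 * s * c)) * c
      - (((c^2 - s^2) - x) * (x - (c^2 - s^2)) + (2 * s * c - y) * (y + 2 * s * c)) * s
    = s * ((x + 1)^2 + y^2 - 2 - 2 * (c^2 - s^2))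
      + s * (s^2 + c^2 - 1) * (2*x - 2 * (c^2 - s^2) - (s^2 + c^2) - 1)" for s c :: real
    by (simp add: algebra_simps power2_eq_square)
  have "Im (P * cis (-(a/2))) = Im P * cos b - Re P * sin b" by (simp add: b_def)
  also have "\<dots> = sin b * ((x + 1)^2 + y^2 - 2 - 2 * cos a)
      + sin b * ((sin b)^2 + (cos b)^2 - 1) * (2*x - 2 * cos a - ((sin b)^2 + (cos b)^2) - 1)"
    unfolding ReP ImP sin_a cos_a by (rule half_angle_identity)
  also have "(x + 1)^2 + y^2 = (cmod (w + 1))^2" by (simp add: cmod_power2 x_def y_def)
  finally show "Im (P * cis (-(a/2))) = sin (a/2) * ((cmod (w + 1))^2 - 2 - 2 * cos a)"
    by (simp add: b_def)
qed

lemma mem_GG_if_norm_lt_one: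
  fixes w :: complex
  assumes a: "0 < a" "a < 1" and w: "cmod w < 1" "2 + 2 * cos a < (cmod (w + 1))^2"
  shows "w \<in> GG a"
proof -
  define P where "P = (cis a - w) * cnj (w - cis (-a))"
  define \<zeta> where "\<zeta> = (cis a - w) / (w - cis (-a))"
  have \<rho>: "0 < (cmod (w - cis (-a)))^2" using w(1) by auto
  have \<zeta>_rotated: "Im (\<zeta> * cis \<phi>) = Im (P * cis \<phi>) / (cmod (w - cis (-a)))^2" for \<phi>
    unfolding \<zeta>_def P_def complex_div_cnj[of "cis a - w"] by (simp add: Im_divide_of_real)
  note Im_P = Im_GG_numerator_rotated[where w=w and a=a, folded P_def]
  have "(cmod w)^2 < 1" using w(1) by (simp add: abs_square_less_1)
  moreover have "0 < sin a" "0 < sin (a/2)" using a pi_gt3 by (auto intro!: sin_gt_zero)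
  ultimately have neg: "Im (P * cis (-a)) < 0" and pos: "0 < Im (P * cis (-(a/2)))"
    unfolding Im_P using w(2) by (simp_all add: mult_neg_pos)
  have "a/2 < Arg \<zeta> \<and> Arg \<zeta> < a"
  proof (rule Arg_between_if_Im_rotations)
    show "Im (\<zeta> * cis (-(a/2))) > 0" unfolding \<zeta>_rotated by (rule divide_pos_pos[OF pos \<rho>])
    show "Im (\<zeta> * cis (-a)) < 0" unfolding \<zeta>_rotated by (rule divide_neg_pos[OF neg \<rho>])
  qed (use a pi_gt3 in auto)
  then show ?thesis unfolding GG_def \<zeta>_def by simp
qed

section \<open>Cancellation in sums over the unit circle\<close>

lemma norm_add_mult_le_of_Re_nonpos:
  fixes p q :: real and u :: complex
  assumes "0 \<le> q" "q \<le> p" "cmod u = 1" "Re u \<le> 0"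
  shows "cmod (of_real p + of_real q * u) \<le> p + q/2"
proof -
  have unit: "(Re u)^2 + (Im u)^2 = 1" using assms(3) by (metis cmod_power2 power_one)
  have "(cmod (of_real p + of_real q * u))^2 = (p + q * Re u)^2 + (q * Im u)^2"
    by (simp add: cmod_power2)
  also have "\<dots> = p^2 + 2*p*q*Re u + q^2 * ((Re u)^2 + (Im u)^2)"
    by (simp add: power2_eq_square algebra_simps)
  also have "\<dots> = p^2 + 2*p*q*Re u + q^2" by (simp add: unit)
  also have "\<dots> \<le> p^2 + q^2"
    using assms mult_nonneg_nonpos[of "2*p*q" "Re u"] by simp
  also have "\<dots> \<le> p^2 + q^2 + (q * (p - q) + q^2/4)"
    using mult_nonneg_nonneg[OF assms(1), of "p - q"] zero_le_power2[of q] assms(2) by linarith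
  also have "\<dots> = (p + q/2)^2"
    by (simp add: power2_eq_square algebra_simps)
  finally show ?thesis by (rule power2_le_imp_le) (use assms in simp)
qed

text \<open>Pairing the terms \<open>j\<close> and \<open>j + k\<close> for \<open>k \<le> j < 2k\<close>: since \<open>Re (u^k) \<le> 0\<close>, each pair
  loses at least half of its smaller coefficient.\<close>
lemma norm_sum_le_pairing:
  fixes p :: "nat \<Rightarrow> real" and u :: complex
  assumes nonneg: "\<And>j. 0 \<le> p j" and antimono: "\<And>i j. 1 \<le> i \<Longrightarrow> i \<le> j \<Longrightarrow> p j \<le> p i"
    and k: "1 \<le> k" "3 * k \<le> m + 1" and u: "cmod u = 1" "Re (u ^ k) \<le> 0"
  shows "cmod (\<Sum>j=1..m. of_real (p j) * u ^ j) \<le> (\<Sum>j=1..m. p j) - (\<Sum>j=k..<2*k. p (j + k)) / 2"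
proof -
  define R where "R = {1..m} - {k..<3*k}"
  have split: "(\<Sum>j=1..m. f j) = (\<Sum>j=k..<2*k. f j + f (j + k)) + (\<Sum>j\<in>R. f j)"
    for f :: "nat \<Rightarrow> 'a::comm_monoid_add"
  proof -
    have "{1..m} = ({k..<2*k} \<union> {2*k..<3*k}) \<union> R" using k unfolding R_def by auto
    then have "(\<Sum>j=1..m. f j) = (\<Sum>j\<in>{k..<2*k} \<union> {2*k..<3*k}. f j) + (\<Sum>j\<in>R. f j)"
      by (simp only:) (rule sum.union_disjoint; auto simp: R_def)
    also have "(\<Sum>j\<in>{k..<2*k} \<union> {2*k..<3*k}. f j) = (\<Sum>j=k..<2*k. f j) + (\<Sum>j=2*k..<3*k. f j)"
      by (rule sum.union_disjoint) auto
    finally have "(\<Sum>j=1..m. f j) = (\<Sum>j=k..<2*k. f j) + (\<Sum>j=2*k..<3*k. f j) + (\<Sum>j\<in>R. f j)" .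
    moreover have "(\<Sum>j=2*k..<3*k. f j) = (\<Sum>j=k..<2*k. f (j + k))"
      using sum.shift_bounds_nat_ivl[of f k k "2*k"] by (simp add: mult_2 numeral_3_eq_3 add.assoc)
    ultimately show ?thesis by (simp add: sum.distrib)
  qed
  have pair: "cmod (of_real (p j) * u ^ j + of_real (p (j + k)) * u ^ (j + k)) \<le> p j + p (j + k) / 2"
    if "j \<in> {k..<2*k}" for j
  proof -
    have "of_real (p j) * u ^ j + of_real (p (j + k)) * u ^ (j + k)
        = u ^ j * (of_real (p j) + of_real (p (j + k)) * u ^ k)"
      by (simp add: power_add algebra_simps)
    moreover have "cmod (of_real (p j) + of_real (p (j + k)) * u ^ k) \<le> p j + p (j + k) / 2"
      using that k nonneg u antimono[of j "j + k"] by (intro norm_add_mult_le_of_Re_nonpos) (auto simp: norm_power)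
    ultimately show ?thesis using u by (simp add: norm_mult norm_power)
  qed
  have "cmod (\<Sum>j=1..m. of_real (p j) * u ^ j)
      \<le> (\<Sum>j=k..<2*k. cmod (of_real (p j) * u ^ j + of_real (p (j + k)) * u ^ (j + k)))
        + (\<Sum>j\<in>R. cmod (of_real (p j) * u ^ j))"
    unfolding split[of "\<lambda>j. of_real (p j) * u ^ j"]
    by (intro order_trans[OF norm_triangle_ineq] add_mono norm_sum)
  also have "\<dots> \<le> (\<Sum>j=k..<2*k. p j + p (j + k) / 2) + (\<Sum>j\<in>R. p j)"
    using pair nonneg u by (intro add_mono sum_mono) (auto simp: norm_mult norm_power)
  also have "\<dots> = (\<Sum>j=1..m. p j) - (\<Sum>j=k..<2*k. p (j + k)) / 2"
    unfolding split[of p] by (simp add: sum.distrib sum_divide_distrib[symmetric])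
  finally show ?thesis .
qed

lemma cmod_le_one_if_Im_sq_le:
  assumes "0 \<le> Re z" "Re z \<le> 1" "(Im z)^2 \<le> 1 - Re z"
  shows "cmod z \<le> 1"
proof -
  have "(cmod z)^2 \<le> (Re z)^2 + (1 - Re z)" using assms(3) by (simp add: cmod_power2)
  also have "\<dots> \<le> 1" using assms(1,2) mult_left_mono[of "Re z" 1 "Re z"] by (simp add: power2_eq_square)
  finally show ?thesis by (simp add: abs_square_le_1)
qed

lemma obtain_nat_mult_between_quarter_half:
  fixes x :: real
  assumes "0 < x" "x \<le> 1/2"
  obtains k :: nat where "1 \<le> k" "1/4 \<le> real k * x" "real k * x \<le> 1/2"
proof
  define k where "k = nat \<lfloor>1 / (2 * x)\<rfloor>"
  have ge1: "1 \<le> 1 / (2 * x)" using assms by (simp add: field_simps)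
  then have k_le: "real k \<le> 1 / (2 * x)" and k_gt: "1 / (2 * x) - 1 < real k"
    unfolding k_def by linarith+
  from k_gt ge1 have "0 < real k" by linarith
  then show "1 \<le> k" by simp
  show "real k * x \<le> 1/2" using k_le assms by (simp add: field_simps)
  show "1/4 \<le> real k * x"
  proof (cases "x \<le> 1/4")
    case True
    have "1/2 - x = (1 / (2 * x) - 1) * x" using assms by (simp add: field_simps)
    also have "\<dots> \<le> real k * x" using k_gt assms by (intro mult_right_mono) auto
    finally show ?thesis using True by linarith
  next
    case False
    have "1 * x \<le> real k * x" using \<open>1 \<le> k\<close> assms by (intro mult_right_mono) auto
    then show ?thesis using False by linarith
  qed
qed

lemma Re_cis_power_nonpos:
  assumes "1/4 \<le> real k * \<bar>t\<bar>" "real k * \<bar>t\<bar> \<le> 1/2"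
  shows "Re (cis (2 * pi * t) ^ k) \<le> 0"
proof -
  have "Re (cis (2 * pi * t) ^ k) = cos (real k * (2 * pi * t))"
    unfolding Complex.DeMoivre by simp
  also have "\<dots> = cos (2 * pi * (real k * \<bar>t\<bar>))"
    by (cases "0 \<le> t") (simp_all add: algebra_simps)
  also have "\<dots> \<le> cos (pi / 2)"
    using assms by (intro cos_monotone_0_pi_le) (auto simp: field_simps)
  finally show ?thesis by simp
qed

section \<open>Position of the sign change\<close>

lemma sum_inverse_ln_sq_head_le:
  assumes "1 < r"
  shows "(\<Sum>j=1..rs. 1 / (ln (real j + 3))^2) \<le> sqrt (real r) + real rs * (4 / (ln (real r))^2)"
proof -
  define f where "f j = 1 / (ln (real j + 3))^2" for j :: nat
  define q where "q = nat \<lfloor>sqrt (real r)\<rfloor>"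
  have "real q = of_int \<lfloor>sqrt (real r)\<rfloor>" unfolding q_def by simp
  then have q_le: "real q \<le> sqrt (real r)" and q_gt: "sqrt (real r) < real q + 1"
    using floor_correct[of "sqrt (real r)"] by linarith+
  have ln_r: "0 < ln (real r)" using assms by simp
  have f_le_1: "f j \<le> 1" for j
    unfolding f_def using one_le_ln_add_3[of j] by (simp add: one_le_power)
  have f_le: "f j \<le> 4 / (ln (real r))^2" if "q < j" for j
  proof -
    have "ln (real r) / 2 = ln (sqrt (real r))" using assms by (simp add: ln_sqrt)
    also have "\<dots> \<le> ln (real j + 3)" using q_gt that assms by (subst ln_le_cancel_iff) auto
    finally have "(ln (real r) / 2)^2 \<le> (ln (real j + 3))^2" using ln_r by (intro power_mono) auto
    then show ?thesis
      unfolding f_def using ln_r one_le_ln_add_3[of j] by (simp add: power_divide field_simps)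
  qed
  define m where "m = min rs q"
  have "{1..rs} = {1..m} \<union> {m+1..rs}" unfolding m_def by auto
  then have "(\<Sum>j=1..rs. f j) = (\<Sum>j=1..m. f j) + (\<Sum>j=m+1..rs. f j)"
    by (simp add: sum.union_disjoint)
  also have "(\<Sum>j=1..m. f j) \<le> real m"
    using sum_bounded_above[of "{1..m}" f 1] f_le_1 by simp
  also have "(\<Sum>j=m+1..rs. f j) \<le> real (card {m+1..rs}) * (4 / (ln (real r))^2)"
  proof (rule sum_bounded_above)
    fix j assume "j \<in> {m+1..rs}"
    then show "f j \<le> 4 / (ln (real r))^2" unfolding m_def by (intro f_le) auto
  qed
  also have "real m \<le> sqrt (real r)" using q_le unfolding m_def by linarith
  also have "real (card {m+1..rs}) * (4 / (ln (real r))^2) \<le> real rs * (4 / (ln (real r))^2)"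
    by (intro mult_right_mono) auto
  finally show ?thesis unfolding f_def by simp
qed

lemma sum_inverse_ln_sq_tail_ge:
  "real (r - rs) / (ln (real r + 3))^2 \<le> (\<Sum>j=rs+1..r. 1 / (ln (real j + 3))^2)"
proof -
  have "1 / (ln (real r + 3))^2 \<le> 1 / (ln (real j + 3))^2" if "j \<in> {rs+1..r}" for j
    using that one_le_ln_add_3[of j] by (intro divide_left_mono power_mono) auto
  then show ?thesis
    using sum_bounded_below[of "{rs+1..r}" "1 / (ln (real r + 3))^2"] by simp
qed

text \<open>The head sum over \<open>j \<le> r\<^sub>*\<close> is \<open>O(\<surd>r + r\<^sub>* / log\<^sup>2 r)\<close>, while the tail sum is at least
  \<open>(r - r\<^sub>*) / log\<^sup>2(r + 3)\<close>; so if the tail does not exceed the head, \<open>r\<^sub>*\<close> is a fixed fraction of \<open>r\<close>.\<close>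
lemma eventually_split_point_ge_sixteenth:
  "\<forall>\<^sub>F r in sequentially. \<forall>rs\<le>r.
     (\<Sum>j=rs+1..r. 1 / (ln (real j + 3))^2) \<le> (\<Sum>j=1..rs. 1 / (ln (real j + 3))^2) \<longrightarrow>
     real r \<le> 16 * real rs"
proof -
  have "\<forall>\<^sub>F x in at_top. sqrt x + x / (4 * (ln x)^2) < 15/16 * x / (ln (x + 3))^2"
    by real_asymp
  moreover have "\<forall>\<^sub>F x in at_top. (16::real) \<le> x" by (rule eventually_ge_at_top)
  ultimately have "\<forall>\<^sub>F x in at_top. 16 \<le> x \<and> sqrt x + x / (4 * (ln x)^2) < 15/16 * x / (ln (x + 3))^2"
    by (simp add: eventually_conj_iff)
  then have "\<forall>\<^sub>F r in sequentially.
      16 \<le> real r \<and> sqrt (real r) + real r / (4 * (ln (real r))^2) < 15/16 * real r / (ln (real r + 3))^2"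
    by (rule eventually_compose_filterlim[OF _ filterlim_real_sequentially])
  then show ?thesis
  proof (rule eventually_mono, intro allI impI)
    fix r rs :: nat
    assume r: "16 \<le> real r \<and> sqrt (real r) + real r / (4 * (ln (real r))^2) < 15/16 * real r / (ln (real r + 3))^2"
      and "rs \<le> r"
      and tail_le_head: "(\<Sum>j=rs+1..r. 1 / (ln (real j + 3))^2) \<le> (\<Sum>j=1..rs. 1 / (ln (real j + 3))^2)"
    show "real r \<le> 16 * real rs"
    proof (rule ccontr)
      assume "\<not> real r \<le> 16 * real rs"
      then have small: "16 * real rs < real r" by simp
      have "real rs * (4 / (ln (real r))^2) \<le> real r / 16 * (4 / (ln (real r))^2)"
        using small by (intro mult_right_mono) auto
      then have "(\<Sum>j=1..rs. 1 / (ln (real j + 3))^2) \<le> sqrt (real r) + real r / (4 * (ln (real r))^2)"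
        using sum_inverse_ln_sq_head_le[of r rs] r by simp
      moreover have "15/16 * real r / (ln (real r + 3))^2 \<le> real (r - rs) / (ln (real r + 3))^2"
        using small \<open>rs \<le> r\<close> by (intro divide_right_mono) (auto simp: of_nat_diff)
      ultimately show False
        using r tail_le_head sum_inverse_ln_sq_tail_ge[of r rs] by linarith
    qed
  qed
qed

section \<open>Admissible scales\<close>

definition tail_mass :: "real \<Rightarrow> nat \<Rightarrow> real" where
  "tail_mass a rs = (\<Sum>j=rs+1..rr a. dd a j)"

definition coef :: "real \<Rightarrow> nat \<Rightarrow> nat \<Rightarrow> real" where
  "coef a rs j = lamt a rs * eps rs j * dd a j"

definition pair_gain :: "real \<Rightarrow> nat \<Rightarrow> real" where
  "pair_gain a k = (\<Sum>j=k..<2*k. dd a (j + k)) / 2"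

lemma dd_eq_lam_log_weight: "dd a j = lam a * log_weight j"
  by (simp add: dd_def log_weight_def)

lemma lam_eq: "lam a = 1 / (\<Sum>j=1..rr a. log_weight j)"
  by (simp add: lam_def log_weight_def)

lemma sum_eps_split:
  fixes f :: "nat \<Rightarrow> 'a::real_algebra_1"
  assumes "rs \<le> r"
  shows "(\<Sum>j=1..r. of_real (eps rs j) * f j) = (\<Sum>j=1..rs. f j) - (\<Sum>j=rs+1..r. f j)"
proof -
  have "{1..r} = {1..rs} \<union> {rs+1..r}" using assms by auto
  then have "(\<Sum>j=1..r. of_real (eps rs j) * f j)
      = (\<Sum>j=1..rs. of_real (eps rs j) * f j) + (\<Sum>j=rs+1..r. of_real (eps rs j) * f j)"
    by (simp add: sum.union_disjoint)
  also have "\<dots> = (\<Sum>j=1..rs. f j) - (\<Sum>j=rs+1..r. f j)"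
    by (simp add: eps_def sum_negf)
  finally show ?thesis .
qed

lemma rr_bounds:
  assumes "0 < a"
  shows "real (rr a) \<le> 1 / sqrt a" "1 / sqrt a - 1 \<le> real (rr a)"
proof -
  have "a powr (-1/2) = 1 / sqrt a"
    using assms by (simp add: powr_minus_divide powr_half_sqrt)
  then have "real (rr a) = of_int \<lfloor>1 / sqrt a\<rfloor>"
    unfolding rr_def using assms by simp
  then show "real (rr a) \<le> 1 / sqrt a" "1 / sqrt a - 1 \<le> real (rr a)"
    by linarith+
qed

lemma two_pi_mult_sq_le:
  fixes t a :: real
  assumes "\<bar>t\<bar> \<le> a / 100"
  shows "(2 * pi * t)^2 \<le> 64/10000 * a^2"
proof -
  have "\<bar>2 * pi * t\<bar> = 2 * pi * \<bar>t\<bar>" by (simp add: abs_mult)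
  also have "\<dots> \<le> 2 * 4 * (a / 100)" using assms pi_less_4 by (intro mult_mono) auto
  finally have "\<bar>2 * pi * t\<bar>^2 \<le> (8/100 * a)^2" by (intro power_mono) auto
  then show ?thesis by (simp add: power_mult_distrib power_divide)
qed

text \<open>For small \<open>a\<close> every admissible \<open>r\<^sub>*\<close> satisfies the last assumption, see
  \<open>eventually_admissible_scale\<close>.\<close>
locale admissible_scale =
  fixes a :: real and rs :: nat
  assumes a_pos: "0 < a"
    and inv_sqrt_ge: "2000 \<le> 1 / sqrt a"
    and rstar: "rstar_ok a rs"
    and rr_le_16_rstar: "real (rr a) \<le> 16 * real rs"
begin

abbreviation \<mu> :: real where "\<mu> \<equiv> lamt a rs * lam a"

lemma a_le: "a \<le> 1/4000000"
proof -
  have "sqrt a \<le> 1/2000" using inv_sqrt_ge a_pos by (simp add: field_simps)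
  then have "(sqrt a)^2 \<le> (1/2000)^2" by (intro power_mono) (use a_pos in auto)
  then show ?thesis using a_pos by (simp add: power2_eq_square)
qed

lemma a_powers_le: "a < 1" "a^2 \<le> 1/10000" "a^4 \<le> a^2 / 10000" "a^10 \<le> a^2 / 100"
proof -
  show "a < 1" using a_le by simp
  have "a * a \<le> (1/100) * (1/100)" using a_le a_pos by (intro mult_mono) auto
  then show a2: "a^2 \<le> 1/10000" by (simp add: power2_eq_square)
  have "a^2 * a^2 \<le> a^2 * (1/10000)" using a2 by (intro mult_left_mono) auto
  then show "a^4 \<le> a^2 / 10000" by (simp flip: power_add)
  have "a^8 \<le> a^1" using a_pos a_le by (intro power_decreasing) auto
  then have "a^2 * a^8 \<le> a^2 * (1/100)" using a_le by (intro mult_left_mono) auto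
  then show "a^10 \<le> a^2 / 100" by (simp flip: power_add)
qed

lemma rr_ge: "1999 \<le> real (rr a)"
  using rr_bounds(2)[OF a_pos] inv_sqrt_ge by linarith

lemma rstar_ge: "124 \<le> real rs"
  using rr_ge rr_le_16_rstar by linarith

lemma rstar_le_rr: "rs \<le> rr a"
  using rstar by (simp add: rstar_ok_def)

lemma lam_bounds: "1/2 \<le> lam a" "lam a \<le> 20/11"
  using sum_log_weight_bounds[of "rr a"] rr_ge by (simp_all add: lam_eq field_simps)

lemma dd_nonneg: "0 \<le> dd a j"
  using lam_bounds log_weight_nonneg[of j] by (simp add: dd_eq_lam_log_weight)

lemma dd_antimono: "1 \<le> i \<Longrightarrow> i \<le> j \<Longrightarrow> dd a j \<le> dd a i"
  using lam_bounds log_weight_antimono[of i j] by (simp add: dd_eq_lam_log_weight mult_left_mono)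

lemma sum_dd: "(\<Sum>j=1..rr a. dd a j) = 1"
  unfolding dd_eq_lam_log_weight sum_distrib_left[symmetric] lam_eq
  using sum_log_weight_bounds(1)[of "rr a"] rr_ge by simp

lemma head_mass: "(\<Sum>j=1..rs. dd a j) = 1 - tail_mass a rs"
proof -
  have "{1..rr a} = {1..rs} \<union> {rs+1..rr a}" using rstar_le_rr by auto
  then have "(\<Sum>j=1..rr a. dd a j) = (\<Sum>j=1..rs. dd a j) + tail_mass a rs"
    unfolding tail_mass_def by (simp add: sum.union_disjoint)
  then show ?thesis using sum_dd by simp
qed

lemma tail_mass_le: "tail_mass a rs \<le> lam a / (real rs * (ln (real rs + 3))^2)"
proof -
  define L where "L = ln (real rs + 3)"
  have L: "1 \<le> L" unfolding L_def by (rule one_le_ln_add_3)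
  have "tail_mass a rs \<le> (\<Sum>j=rs+1..rr a. lam a / L^2 * (1 / (real j)^2))"
    unfolding tail_mass_def
  proof (rule sum_mono)
    fix j assume j: "j \<in> {rs+1..rr a}"
    have "L^2 \<le> (ln (real j + 3))^2" using j L unfolding L_def by (intro power_mono) auto
    then have "(real j)^2 * L^2 \<le> (real j)^2 * (ln (real j + 3))^2" by (intro mult_left_mono) auto
    then show "dd a j \<le> lam a / L^2 * (1 / (real j)^2)"
      unfolding dd_def using lam_bounds L j by (simp add: divide_left_mono mult.commute)
  qed
  also have "\<dots> = lam a / L^2 * (\<Sum>j=rs+1..rr a. 1 / (real j)^2)"
    by (simp add: sum_distrib_left)
  also have "\<dots> \<le> lam a / L^2 * (1 / real rs)"
    using sum_inverse_squares_tail_le[of rs "rr a"] rstar_ge lam_bounds by (intro mult_left_mono) auto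
  finally show ?thesis unfolding L_def by (simp add: mult.commute)
qed

lemma tail_mass_bounds: "0 \<le> tail_mass a rs" "tail_mass a rs \<le> 1/40"
proof -
  show "0 \<le> tail_mass a rs" unfolding tail_mass_def using dd_nonneg by (simp add: sum_nonneg)
  have "1 \<le> (ln (real rs + 3))^2" using one_le_ln_add_3[of rs] by (simp add: one_le_power)
  then have "lam a / (real rs * (ln (real rs + 3))^2) \<le> lam a / (real rs * 1)"
    using lam_bounds rstar_ge by (intro divide_left_mono mult_left_mono) auto
  also have "\<dots> \<le> 1/40" using lam_bounds rstar_ge by (simp add: field_simps)
  finally show "tail_mass a rs \<le> 1/40" using tail_mass_le by linarith
qed

lemma lamt_eq: "lamt a rs = 1 / (1 - 2 * tail_mass a rs)"
  using sum_eps_split[OF rstar_le_rr, of "dd a"] head_mass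
  by (simp add: lamt_def tail_mass_def)

lemma lamt_bounds: "1 \<le> lamt a rs" "lamt a rs \<le> 20/19"
  using tail_mass_bounds by (simp_all add: lamt_eq field_simps)

lemma mu_bounds: "1/2 \<le> \<mu>" "\<mu> \<le> 192/100"
proof -
  show "1/2 \<le> \<mu>"
    using lamt_bounds lam_bounds mult_mono[of 1 "lamt a rs" "1/2" "lam a"] by simp
  show "\<mu> \<le> 192/100"
    using lamt_bounds lam_bounds mult_mono[of "lamt a rs" "20/19" "lam a" "20/11"] by simp
qed

lemma sum_coef: "(\<Sum>j=1..rr a. coef a rs j) = 1"
proof -
  have "(\<Sum>j=1..rr a. eps rs j * dd a j) = 1 - 2 * tail_mass a rs"
    using sum_eps_split[OF rstar_le_rr, of "dd a"] head_mass by (simp add: tail_mass_def)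
  moreover have "(\<Sum>j=1..rr a. coef a rs j) = lamt a rs * (\<Sum>j=1..rr a. eps rs j * dd a j)"
    by (simp add: coef_def sum_distrib_left mult.assoc)
  ultimately show ?thesis
    using tail_mass_bounds by (simp add: lamt_eq)
qed

lemma abs_coef: "\<bar>coef a rs j\<bar> = lamt a rs * dd a j"
  using lamt_bounds dd_nonneg[of j] by (simp add: coef_def eps_def abs_mult)

lemma coef_mult_square:
  assumes "1 \<le> j"
  shows "coef a rs j * (real j)^2 = \<mu> * (eps rs j / (ln (real j + 3))^2)"
  using assms by (simp add: coef_def dd_def field_simps)

lemma abs_coef_mult_square:
  assumes "1 \<le> j"
  shows "\<bar>coef a rs j\<bar> * (real j)^2 = \<mu> / (ln (real j + 3))^2"
  using assms by (simp add: abs_coef dd_def field_simps)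

lemma second_moment_bounds:
  "20 * \<mu> \<le> (\<Sum>j=1..rr a. coef a rs j * (real j)^2)"
  "(\<Sum>j=1..rr a. coef a rs j * (real j)^2) \<le> 21 * \<mu>"
proof -
  have "(\<Sum>j=1..rr a. coef a rs j * (real j)^2) = \<mu> * (\<Sum>j=1..rr a. eps rs j * (1 / (ln (real j + 3))^2))"
    by (simp add: coef_mult_square sum_distrib_left)
  also have "(\<Sum>j=1..rr a. eps rs j * (1 / (ln (real j + 3))^2))
      = (\<Sum>j=1..rs. 1 / (ln (real j + 3))^2) - (\<Sum>j=rs+1..rr a. 1 / (ln (real j + 3))^2)"
    using sum_eps_split[OF rstar_le_rr, of "\<lambda>j. 1 / (ln (real j + 3))^2"] by simp
  finally show "20 * \<mu> \<le> (\<Sum>j=1..rr a. coef a rs j * (real j)^2)"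
    "(\<Sum>j=1..rr a. coef a rs j * (real j)^2) \<le> 21 * \<mu>"
    using rstar mu_bounds by (auto simp: rstar_ok_def Let_def mult.commute intro: mult_left_mono)
qed

lemma abs_first_moment_le: "\<bar>\<Sum>j=1..rr a. coef a rs j * real j\<bar> \<le> 41/20 * \<mu>"
proof -
  have "\<bar>coef a rs j * real j\<bar> = \<mu> * (1 / (real j * (ln (real j + 3))^2))" if "1 \<le> j" for j
    using abs_coef_mult_square[OF that] that by (simp add: abs_mult power2_eq_square field_simps)
  then have "(\<Sum>j=1..rr a. \<bar>coef a rs j * real j\<bar>) = \<mu> * (\<Sum>j=1..rr a. 1 / (real j * (ln (real j + 3))^2))"
    by (simp add: sum_distrib_left)
  also have "\<dots> \<le> \<mu> * (41/20)"
    using sum_inverse_mult_ln_sq_le mu_bounds by (intro mult_left_mono) auto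
  finally show ?thesis using sum_abs[of "\<lambda>j. coef a rs j * real j" "{1..rr a}"] by linarith
qed

lemma abs_moment_le:
  assumes "2 \<le> k"
  shows "(\<Sum>j=1..rr a. \<bar>coef a rs j\<bar> * real j ^ k) \<le> \<mu> * real (rr a) ^ (k - 1)"
proof -
  obtain n where k: "k = n + 2" using assms by (metis add.commute le_add_diff_inverse)
  have term_le: "\<bar>coef a rs j\<bar> * real j ^ (n + 2) \<le> \<mu> * real (rr a) ^ n" if "j \<in> {1..rr a}" for j
  proof -
    have "real j ^ (n + 2) = (real j)^2 * real j ^ n"
      by (rule trans[OF power_add mult.commute])
    then have "\<bar>coef a rs j\<bar> * real j ^ (n + 2) = (\<bar>coef a rs j\<bar> * (real j)^2) * real j ^ n"
      by (simp only: mult.assoc)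
    also have "\<dots> = \<mu> / (ln (real j + 3))^2 * real j ^ n"
      using abs_coef_mult_square[of j] that by simp
    also have "\<dots> \<le> \<mu> * real (rr a) ^ n"
    proof (rule mult_mono)
      have "1 \<le> (ln (real j + 3))^2" using one_le_ln_add_3[of j] by (simp add: one_le_power)
      then show "\<mu> / (ln (real j + 3))^2 \<le> \<mu>"
        using mu_bounds by (simp add: divide_le_eq mult_le_cancel_left1)
      show "real j ^ n \<le> real (rr a) ^ n" using that by (intro power_mono) auto
    qed (use mu_bounds in auto)
    finally show ?thesis .
  qed
  have "(\<Sum>j=1..rr a. \<bar>coef a rs j\<bar> * real j ^ (n + 2)) \<le> real (card {1..rr a}) * (\<mu> * real (rr a) ^ n)"
    by (rule sum_bounded_above) (rule term_le)
  also have "\<dots> = \<mu> * real (rr a) ^ (n + 1)"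
    by (simp add: mult.left_commute)
  finally show ?thesis unfolding k by simp
qed

lemma htilde_cis: "htilde a rs (cis \<theta>) = (\<Sum>j=1..rr a. of_real (coef a rs j) * cis (real j * \<theta>))"
  by (simp add: htilde_def coef_def Complex.DeMoivre sum_distrib_left mult.assoc)

lemma Re_htilde_cis: "Re (htilde a rs (cis \<theta>)) = 1 - (\<Sum>j=1..rr a. coef a rs j * (1 - cos (real j * \<theta>)))"
  using sum_coef by (simp add: htilde_cis Re_sum algebra_simps sum_subtractf)

lemma Im_htilde_cis: "Im (htilde a rs (cis \<theta>)) = (\<Sum>j=1..rr a. coef a rs j * sin (real j * \<theta>))"
  by (simp add: htilde_cis Im_sum)

lemma small_angle_mult_rr_cube_le:
  assumes "\<theta>^2 \<le> 64/10000 * a^2"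
  shows "\<theta>^2 * real (rr a)^3 \<le> 1/10000"
proof -
  define u where "u = 1 / sqrt a"
  have u: "2000 \<le> u" "a * u^2 = 1" using inv_sqrt_ge a_pos by (simp_all add: u_def power_divide)
  have "\<theta>^2 * real (rr a)^3 \<le> (64/10000 * a^2) * u^3"
    using assms rr_bounds(1)[OF a_pos] unfolding u_def[symmetric]
    by (intro mult_mono power_mono) auto
  also have "\<dots> = 64/10000 / u * ((a * u^2) * (a * u^2))"
    using u(1) by (simp add: power2_eq_square power3_eq_cube field_simps)
  also have "\<dots> \<le> 64/10000 / 2000"
    using u by (simp add: divide_left_mono)
  finally show ?thesis by simp
qed

lemma one_minus_Re_htilde_cis_bounds:
  assumes "\<theta>^2 \<le> 64/10000 * a^2"
  shows "999/100 * (\<theta>^2 * \<mu>) \<le> 1 - Re (htilde a rs (cis \<theta>))"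
    and "1 - Re (htilde a rs (cis \<theta>)) \<le> 11 * (\<theta>^2 * \<mu>)"
proof -
  define X where "X = (\<Sum>j=1..rr a. coef a rs j * (1 - cos (real j * \<theta>)))"
  have X: "1 - Re (htilde a rs (cis \<theta>)) = X" by (simp add: X_def Re_htilde_cis)
  have "\<bar>X - \<theta>^2 / 2 * (\<Sum>j=1..rr a. coef a rs j * (real j)^2)\<bar>
      \<le> \<theta>^4 / 24 * (\<Sum>j=1..rr a. \<bar>coef a rs j\<bar> * (real j)^4)"
    unfolding X_def by (rule abs_sum_one_minus_cos_taylor_le)
  also have "\<dots> \<le> \<theta>^4 / 24 * (\<mu> * real (rr a)^3)"
    using abs_moment_le[of 4] by (intro mult_left_mono) auto
  also have "\<dots> = (\<theta>^2 * \<mu>) * (\<theta>^2 * real (rr a)^3) / 24"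
    by (simp add: power2_eq_square power4_eq_xxxx)
  also have "\<dots> \<le> (\<theta>^2 * \<mu>) * (1/10000) / 24"
    using small_angle_mult_rr_cube_le[OF assms] mu_bounds
    by (intro divide_right_mono mult_left_mono) auto
  finally have err: "\<bar>X - \<theta>^2 / 2 * (\<Sum>j=1..rr a. coef a rs j * (real j)^2)\<bar> \<le> (\<theta>^2 * \<mu>) / 240000"
    by simp
  have "10 * (\<theta>^2 * \<mu>) \<le> \<theta>^2 / 2 * (\<Sum>j=1..rr a. coef a rs j * (real j)^2)"
    using mult_left_mono[OF second_moment_bounds(1), of "\<theta>^2 / 2"] by (simp add: mult_ac)
  moreover have "\<theta>^2 / 2 * (\<Sum>j=1..rr a. coef a rs j * (real j)^2) \<le> 21/2 * (\<theta>^2 * \<mu>)"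
    using mult_left_mono[OF second_moment_bounds(2), of "\<theta>^2 / 2"] by simp
  moreover have "0 \<le> \<theta>^2 * \<mu>" using mu_bounds by simp
  ultimately show "999/100 * (\<theta>^2 * \<mu>) \<le> 1 - Re (htilde a rs (cis \<theta>))"
    and "1 - Re (htilde a rs (cis \<theta>)) \<le> 11 * (\<theta>^2 * \<mu>)"
    unfolding X using err by linarith+
qed

lemma one_minus_Re_htilde_cis_le:
  assumes "\<theta>^2 \<le> 64/10000 * a^2"
  shows "0 \<le> 1 - Re (htilde a rs (cis \<theta>))" "1 - Re (htilde a rs (cis \<theta>)) \<le> 14/100 * a^2"
proof -
  have "\<theta>^2 * \<mu> \<le> 64/10000 * a^2 * (192/100)"
    using assms mu_bounds by (intro mult_mono) auto
  then show "1 - Re (htilde a rs (cis \<theta>)) \<le> 14/100 * a^2"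
    using one_minus_Re_htilde_cis_bounds(2)[OF assms] zero_le_power2[of a] by linarith
  have "0 \<le> \<theta>^2 * \<mu>" using mu_bounds by simp
  then show "0 \<le> 1 - Re (htilde a rs (cis \<theta>))"
    using one_minus_Re_htilde_cis_bounds(1)[OF assms] by linarith
qed

lemma Im_htilde_cis_sq_le:
  assumes "\<theta>^2 \<le> 64/10000 * a^2"
  shows "(Im (htilde a rs (cis \<theta>)))^2 \<le> 9 * (\<theta>^2 * \<mu>)"
proof -
  have "\<bar>Im (htilde a rs (cis \<theta>)) - \<theta> * (\<Sum>j=1..rr a. coef a rs j * real j)\<bar>
      \<le> \<bar>\<theta>\<bar>^3 / 6 * (\<Sum>j=1..rr a. \<bar>coef a rs j\<bar> * (real j)^3)"
    unfolding Im_htilde_cis by (rule abs_sum_sin_taylor_le)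
  also have "\<dots> \<le> \<bar>\<theta>\<bar>^3 / 6 * (\<mu> * real (rr a)^2)"
    using abs_moment_le[of 3] by (intro mult_left_mono) auto
  also have "\<dots> = \<bar>\<theta>\<bar> * \<mu> * (\<theta>^2 * real (rr a)^2) / 6"
    by (simp add: power2_eq_square power3_eq_cube)
  also have "\<dots> \<le> \<bar>\<theta>\<bar> * \<mu> * (1/10000) / 6"
  proof -
    have "\<theta>^2 * real (rr a)^2 \<le> \<theta>^2 * real (rr a)^3"
      using rr_ge by (intro mult_left_mono power_increasing) auto
    then show ?thesis
      using small_angle_mult_rr_cube_le[OF assms] mu_bounds
      by (intro divide_right_mono mult_left_mono) auto
  qed
  finally have err: "\<bar>Im (htilde a rs (cis \<theta>)) - \<theta> * (\<Sum>j=1..rr a. coef a rs j * real j)\<bar>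
      \<le> \<bar>\<theta>\<bar> * \<mu> * (1/10000) / 6" .
  have "\<bar>Im (htilde a rs (cis \<theta>))\<bar>
      \<le> \<bar>Im (htilde a rs (cis \<theta>)) - \<theta> * (\<Sum>j=1..rr a. coef a rs j * real j)\<bar>
        + \<bar>\<theta> * (\<Sum>j=1..rr a. coef a rs j * real j)\<bar>"
    using abs_triangle_ineq[of "Im (htilde a rs (cis \<theta>)) - \<theta> * (\<Sum>j=1..rr a. coef a rs j * real j)"
        "\<theta> * (\<Sum>j=1..rr a. coef a rs j * real j)"] by simp
  also have "\<dots> \<le> \<bar>\<theta>\<bar> * \<mu> * (1/10000) / 6 + \<bar>\<theta>\<bar> * (41/20 * \<mu>)"
    using err unfolding abs_mult by (intro add_mono mult_left_mono abs_first_moment_le) auto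
  also have "\<dots> = \<bar>\<theta>\<bar> * (\<mu> * (41/20 + 1/60000))"
    by (simp add: algebra_simps)
  also have "\<dots> \<le> \<bar>\<theta>\<bar> * (\<mu> * (206/100))"
    using mu_bounds by (intro mult_left_mono) auto
  finally have "\<bar>Im (htilde a rs (cis \<theta>))\<bar> \<le> \<bar>\<theta>\<bar> * (\<mu> * (206/100))" .
  then have "\<bar>Im (htilde a rs (cis \<theta>))\<bar>^2 \<le> (\<bar>\<theta>\<bar> * (\<mu> * (206/100)))^2"
    by (rule power_mono) simp
  then have "(Im (htilde a rs (cis \<theta>)))^2 \<le> (\<bar>\<theta>\<bar> * (\<mu> * (206/100)))^2"
    by (simp only: power2_abs)
  also have "\<dots> = (\<theta>^2 * \<mu>) * (\<mu> * (206/100)^2)"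
    by (simp add: power_mult_distrib power2_eq_square)
  also have "\<dots> \<le> (\<theta>^2 * \<mu>) * 9"
    using mu_bounds by (intro mult_left_mono) (auto simp: power2_eq_square)
  finally show ?thesis by simp
qed

lemma norm_htilde_cis_le_one:
  assumes "\<theta>^2 \<le> 64/10000 * a^2"
  shows "cmod (htilde a rs (cis \<theta>)) \<le> 1"
proof (rule cmod_le_one_if_Im_sq_le)
  show "0 \<le> Re (htilde a rs (cis \<theta>))" "Re (htilde a rs (cis \<theta>)) \<le> 1"
    using one_minus_Re_htilde_cis_le[OF assms] a_powers_le(2) by linarith+
  show "(Im (htilde a rs (cis \<theta>)))^2 \<le> 1 - Re (htilde a rs (cis \<theta>))"
  proof -
    have "0 \<le> \<theta>^2 * \<mu>" using mu_bounds by simp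
    then show ?thesis
      using one_minus_Re_htilde_cis_bounds(1)[OF assms] Im_htilde_cis_sq_le[OF assms] by linarith
  qed
qed

lemma hh_cis_in_GG:
  assumes "\<bar>t\<bar> \<le> a / 100"
  shows "hh a rs (cis (2 * pi * t)) \<in> GG a"
proof -
  define \<theta> where "\<theta> = 2 * pi * t"
  define w where "w = hh a rs (cis \<theta>)"
  define X where "X = 1 - Re (htilde a rs (cis \<theta>))"
  have \<theta>: "\<theta>^2 \<le> 64/10000 * a^2" unfolding \<theta>_def using assms by (rule two_pi_mult_sq_le)
  have X: "0 \<le> X" "X \<le> 14/100 * a^2" unfolding X_def using one_minus_Re_htilde_cis_le[OF \<theta>] .
  note a_small = a_powers_le
  have "0 \<le> 1 - a^10" using a_pos a_small by (simp add: power_le_one)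
  then have "cmod w = (1 - a^10) * cmod (htilde a rs (cis \<theta>))"
    by (simp add: w_def hh_def norm_mult del: of_real_diff)
  also have "\<dots> \<le> (1 - a^10) * 1"
    using norm_htilde_cis_le_one[OF \<theta>] \<open>0 \<le> 1 - a^10\<close> by (intro mult_left_mono)
  finally have "cmod w \<le> 1 - a^10" by simp
  then have "cmod w < 1" using zero_less_power[OF a_pos, of 10] by linarith
  moreover have "2 + 2 * cos a < (cmod (w + 1))^2"
  proof -
    define \<delta> where "\<delta> = a^10 + X"
    have "Re w = (1 - a^10) * (1 - X)"
      by (simp add: w_def hh_def X_def del: of_real_diff)
    also have "\<dots> = 1 - \<delta> + a^10 * X" by (simp add: \<delta>_def algebra_simps)
    finally have Re_w: "2 - \<delta> \<le> Re w + 1" using X a_pos by simp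
    have "4 - 4 * \<delta> + \<delta>^2 = (2 - \<delta>)^2" by (simp add: power2_eq_square algebra_simps)
    also have "\<dots> \<le> (Re w + 1)^2"
      using Re_w X a_small unfolding \<delta>_def by (intro power_mono) auto
    also have "\<dots> \<le> (cmod (w + 1))^2" by (simp add: cmod_power2)
    finally have "4 - 4 * \<delta> \<le> (cmod (w + 1))^2"
      using zero_le_power2[of \<delta>] by linarith
    moreover have "\<delta> \<le> 15/100 * a^2" unfolding \<delta>_def using X a_small by linarith
    moreover have "2 + 2 * cos a \<le> 4 - a^2 + a^4 / 12"
      using one_minus_cos_ge[of a] by linarith
    moreover have "0 < a^2" using a_pos by simp
    ultimately show ?thesis using a_small by linarith
  qed
  ultimately show ?thesis
    unfolding w_def \<theta>_def using mem_GG_if_norm_lt_one a_pos a_small by blast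
qed

lemma pair_gain_ge:
  assumes "1 \<le> k"
  shows "lam a / (18 * real k * (ln (real (3 * k) + 3))^2) \<le> pair_gain a k"
proof -
  have "real (card {k..<2*k}) * dd a (3 * k) \<le> (\<Sum>j=k..<2*k. dd a (j + k))"
    by (rule sum_bounded_below) (use assms in \<open>auto intro!: dd_antimono\<close>)
  moreover have "lam a / (18 * real k * (ln (real (3 * k) + 3))^2) = real k * dd a (3 * k) / 2"
    using assms one_le_ln_add_3[of "3 * k"] by (simp add: dd_def field_simps power2_eq_square)
  ultimately show ?thesis unfolding pair_gain_def by simp
qed

lemma tail_mass_le_pair_gain:
  assumes "1 \<le> k" "72 * k \<le> rs"
  shows "tail_mass a rs \<le> pair_gain a k / 4"
proof -
  define L where "L = ln (real (3 * k) + 3)"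
  have L: "1 \<le> L" "L \<le> ln (real rs + 3)"
    using assms one_le_ln_add_3[of "3 * k"] by (simp_all add: L_def)
  have "72 * real k * L^2 \<le> real rs * (ln (real rs + 3))^2"
    using assms L by (intro mult_mono power_mono) auto
  then have "lam a / (real rs * (ln (real rs + 3))^2) \<le> lam a / (72 * real k * L^2)"
    using assms L lam_bounds by (intro divide_left_mono) auto
  also have "\<dots> = lam a / (18 * real k * L^2) / 4" by simp
  also have "\<dots> \<le> pair_gain a k / 4"
    using pair_gain_ge[OF assms(1)] unfolding L_def by simp
  finally show ?thesis using tail_mass_le by linarith
qed

lemma norm_htilde_le_pair_gain:
  assumes k: "1 \<le> k" "72 * k \<le> rs" and z: "cmod z = 1" "Re (z ^ k) \<le> 0"
  shows "cmod (htilde a rs z) \<le> 1 - pair_gain a k / 2"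
proof -
  define N where "N = tail_mass a rs"
  have N: "0 \<le> N" "N \<le> 1/40" "N \<le> pair_gain a k / 4"
    using tail_mass_bounds tail_mass_le_pair_gain[OF k] by (simp_all add: N_def)
  have head: "cmod (\<Sum>j=1..rs. of_real (dd a j) * z ^ j) \<le> 1 - N - pair_gain a k"
    using norm_sum_le_pairing[of "dd a" k rs z] dd_nonneg dd_antimono k z head_mass
    by (simp add: N_def pair_gain_def)
  have tail: "cmod (\<Sum>j=rs+1..rr a. of_real (dd a j) * z ^ j) \<le> N"
    using norm_sum[of "\<lambda>j. of_real (dd a j) * z ^ j" "{rs+1..rr a}"] dd_nonneg z
    by (simp add: N_def tail_mass_def norm_mult norm_power)
  have "htilde a rs z = of_real (lamt a rs) *
      ((\<Sum>j=1..rs. of_real (dd a j) * z ^ j) - (\<Sum>j=rs+1..rr a. of_real (dd a j) * z ^ j))"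
    using sum_eps_split[OF rstar_le_rr, of "\<lambda>j. of_real (dd a j) * z ^ j"]
    by (simp add: htilde_def mult.assoc)
  then have "cmod (htilde a rs z) = lamt a rs *
      cmod ((\<Sum>j=1..rs. of_real (dd a j) * z ^ j) - (\<Sum>j=rs+1..rr a. of_real (dd a j) * z ^ j))"
    using lamt_bounds by (simp add: norm_mult)
  also have "\<dots> \<le> lamt a rs * ((1 - N - pair_gain a k) + N)"
    using head tail lamt_bounds
    by (intro mult_left_mono order_trans[OF norm_triangle_ineq4] add_mono) auto
  also have "\<dots> = lamt a rs * (1 - pair_gain a k)" by simp
  also have "\<dots> \<le> 1 - pair_gain a k / 2"
  proof -
    have "0 \<le> pair_gain a k * N" using N by simp
    moreover have "(1 - pair_gain a k / 2) * (1 - 2 * N) = 1 - 2 * N - pair_gain a k / 2 + pair_gain a k * N"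
      by (simp add: field_simps)
    ultimately have "1 - pair_gain a k \<le> (1 - pair_gain a k / 2) * (1 - 2 * N)"
      using N by linarith
    then show ?thesis using N by (simp add: lamt_eq N_def[symmetric] field_simps)
  qed
  finally show ?thesis .
qed

lemma ln_shift_le_ln_inverse:
  assumes "j \<le> rs"
  shows "ln (real j + 3) \<le> ln (1 / a)"
proof -
  define u where "u = 1 / sqrt a"
  have u: "2000 \<le> u" "u * u = 1 / a" using inv_sqrt_ge a_pos by (simp_all add: u_def)
  have "real j + 3 \<le> u + 3"
    using assms rstar_le_rr rr_bounds(1)[OF a_pos] unfolding u_def by linarith
  also have "\<dots> \<le> u * u" using u mult_right_mono[of 2000 u u] by linarith
  finally show ?thesis using u a_pos by (subst ln_le_cancel_iff) auto
qed

lemma norm_hh_cis_le: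
  assumes t: "\<bar>t\<bar> \<le> 1/2" "1152 * sqrt a < \<bar>t\<bar>"
  shows "cmod (hh a rs (cis (2 * pi * t))) \<le> 1 - 1/36 * \<bar>t\<bar> / (ln (1 / a))^2"
proof -
  have t_pos: "0 < \<bar>t\<bar>" using t a_pos by (smt (verit) real_sqrt_gt_zero)
  obtain k :: nat where k: "1 \<le> k" "1/4 \<le> real k * \<bar>t\<bar>" "real k * \<bar>t\<bar> \<le> 1/2"
    using obtain_nat_mult_between_quarter_half[OF t_pos t(1)] by blast
  have "72 * real k \<le> 36 / \<bar>t\<bar>" using k t_pos by (simp add: field_simps)
  also have "\<dots> \<le> 36 / (1152 * sqrt a)" using t t_pos a_pos by (intro divide_left_mono) auto
  also have "\<dots> \<le> real rs"
    using rr_bounds(2)[OF a_pos] rr_le_16_rstar inv_sqrt_ge by simp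
  finally have k_le: "72 * k \<le> rs" by linarith
  define \<Lambda> where "\<Lambda> = (ln (1 / a))^2"
  define L where "L = ln (real (3 * k) + 3)"
  have L: "1 \<le> L" "L^2 \<le> \<Lambda>"
    using one_le_ln_add_3[of "3 * k"] ln_shift_le_ln_inverse[of "3 * k"] k_le
    by (simp_all add: L_def \<Lambda>_def power_mono)
  have \<Lambda>_pos: "0 < \<Lambda>" using L by (smt (verit) one_le_power)
  have "\<bar>t\<bar> / (18 * \<Lambda>) = (real k * \<bar>t\<bar>) / (18 * real k * \<Lambda>)"
    using k by simp
  also have "\<dots> \<le> (1/2) / (18 * real k * \<Lambda>)"
    using k \<Lambda>_pos by (intro divide_right_mono) auto
  also have "\<dots> \<le> lam a / (18 * real k * L^2)"
    using lam_bounds k L by (intro frac_le mult_left_mono) auto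
  also have "\<dots> \<le> pair_gain a k"
    using pair_gain_ge[OF k(1)] unfolding L_def .
  finally have gain: "\<bar>t\<bar> / (18 * \<Lambda>) \<le> pair_gain a k" .
  have "cmod (hh a rs (cis (2 * pi * t))) \<le> cmod (htilde a rs (cis (2 * pi * t)))"
    using a_pos a_le by (simp add: hh_def norm_mult power_le_one mult_left_le_one_le del: of_real_diff)
  also have "\<dots> \<le> 1 - pair_gain a k / 2"
    using k k_le by (intro norm_htilde_le_pair_gain Re_cis_power_nonpos) auto
  finally show ?thesis using gain unfolding \<Lambda>_def by simp
qed

end

lemma eventually_admissible_scale:
  "\<exists>a0>0. \<forall>a rs. 0 < a \<and> a < a0 \<and> rstar_ok a rs \<longrightarrow> admissible_scale a rs"
proof -
  obtain N where N: "\<And>r rs. N \<le> r \<Longrightarrow> rs \<le> r \<Longrightarrow>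
      (\<Sum>j=rs+1..r. 1 / (ln (real j + 3))^2) \<le> (\<Sum>j=1..rs. 1 / (ln (real j + 3))^2) \<Longrightarrow>
      real r \<le> 16 * real rs"
    using eventually_split_point_ge_sixteenth unfolding eventually_sequentially by blast
  define K where "K = real N + 2001"
  have K: "0 < K" unfolding K_def by simp
  show ?thesis
  proof (intro exI[of _ "1 / K^2"] conjI allI impI)
    show "0 < 1 / K^2" using K by simp
    fix a rs assume a: "0 < a \<and> a < 1 / K^2 \<and> rstar_ok a rs"
    then have "sqrt a < 1 / K"
      using K by (metis real_sqrt_less_iff real_sqrt_divide real_sqrt_one real_sqrt_abs abs_of_pos
          power2_eq_square)
    then have inv: "K < 1 / sqrt a" using a K by (simp add: field_simps)
    have "N \<le> rr a" using rr_bounds(2)[of a] a inv unfolding K_def by linarith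
    then have "real (rr a) \<le> 16 * real rs"
      using a by (intro N) (auto simp: rstar_ok_def Let_def)
    then show "admissible_scale a rs"
      using a inv unfolding K_def by unfold_locales auto
  qed
qed

theorem lemma7:
  shows "\<exists>c4 c5 C6 :: real. c4 > 0 \<and> c5 > 0 \<and> C6 > 0 \<and>
    (\<exists>a0 > 0. \<forall>a. 0 < a \<and> a < a0 \<longrightarrow> (\<forall>rs. rstar_ok a rs \<longrightarrow>
      (\<forall>t::real. \<bar>t\<bar> \<le> c4 * a \<longrightarrow> hh a rs (cis (2 * pi * t)) \<in> GG a) \<and>
      (\<forall>t::real. \<bar>t\<bar> \<le> 1/2 \<and> \<bar>t\<bar> > C6 * a powr (1/2) \<longrightarrow>
         cmod (hh a rs (cis (2 * pi * t))) \<le> 1 - c5 * \<bar>t\<bar> / (ln (1 / a))\<^sup>2)))"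
proof -
  obtain a0 where a0: "0 < a0" "\<And>a rs. 0 < a \<Longrightarrow> a < a0 \<Longrightarrow> rstar_ok a rs \<Longrightarrow> admissible_scale a rs"
    using eventually_admissible_scale by blast
  have "(\<forall>t::real. \<bar>t\<bar> \<le> 1/100 * a \<longrightarrow> hh a rs (cis (2 * pi * t)) \<in> GG a) \<and>
      (\<forall>t::real. \<bar>t\<bar> \<le> 1/2 \<and> \<bar>t\<bar> > 1152 * a powr (1/2) \<longrightarrow>
         cmod (hh a rs (cis (2 * pi * t))) \<le> 1 - 1/36 * \<bar>t\<bar> / (ln (1 / a))\<^sup>2)"
    if "0 < a" "a < a0" "rstar_ok a rs" for a rs
  proof -
    interpret admissible_scale a rs using a0(2) that .
    show ?thesis
      using hh_cis_in_GG norm_hh_cis_le a_pos by (simp add: powr_half_sqrt)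
  qed
  then show ?thesis using a0(1) by (intro exI[of _ "1/100"] exI[of _ "1/36"] exI[of _ 1152]) auto
qed

end
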